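(* For any invoking cost $q>0$, every deterministic on-line exploration strategy $\mathcal{S}$ for edge-weighted rings has competitive ratio at least $\frac{3}{2}$, i.e., $\sup_{C}\mathcal{S}(C)/\mathcal{S}^{opt}(C)\ge \frac32$, where the supremum is over all edge-weighted rings $C$ with the homebase at a vertex $v_0$.
   Context: Exploration model: a connected undirected graph with positive edge weights $w$ and a designated homebase vertex is given, together with an invoking cost $q\ge 0$. A strategy is a sequence of moves, each either (1) invoking a new agent, which appears at the homebase, or (2) an agent traversing an edge incident to its current vertex. A vertex is explored when first visited; a strategy explores the graph when every vertex has been visited by some agent (agents need not return). If $k$ agents are used and agent $i$ traverses total distance $d_i$ (sum of weights of traversed edges, with multiplicity), the cost is $kq+\sum_i d_i$. A ring is a cycle graph with at least $3$ vertices. In the on-line setting the graph is not known in advance: an agent at vertex $v$ knows the weights of the edges incident to $v$ and whether each neighbour of $v$ has been explored, and agents communicate freely; each move depends only on information revealed so far. $\mathcal{S}(C)$ is the cost of $\mathcal{S}$ on $C$ and $\mathcal{S}^{opt}(C)$ is the minimum cost of an off-line strategy (full knowledge of $C$) exploring $C$. The competitive ratio of $\mathcal{S}$ is $\sup_C \mathcal{S}(C)/\mathcal{S}^{opt}(C)$. *)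

theory Defs
  imports Main "HOL-Library.Extended_Real"
begin

(* A ring with n >= 3 vertices 0..n-1, homebase 0.  w i is the weight of the
   edge {i, (i+1) mod n}.  Direction True = towards (v+1) mod n ("right"),
   False = towards (v+n-1) mod n ("left"). *)

definition is_ring :: "nat \<Rightarrow> (nat \<Rightarrow> real) \<Rightarrow> bool" where
  "is_ring n w \<longleftrightarrow> n \<ge> 3 \<and> (\<forall>i<n. w i > 0)"

datatype move = Invoke | Go nat bool

(* local view of an agent at vertex v: (weight of left edge, weight of right edge,
   left neighbour explored, right neighbour explored) *)
type_synonym lview = "real \<times> real \<times> bool \<times> bool"
type_synonym view = "lview list"
type_synonym strategy = "view list \<Rightarrow> move"   (* on-line: next move from revealed info *)

(* state: agent positions, explored vertices, accumulated cost *)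
type_synonym state = "nat list \<times> nat set \<times> real"

definition left_nb :: "nat \<Rightarrow> nat \<Rightarrow> nat" where
  "left_nb n v = (v + n - 1) mod n"

definition right_nb :: "nat \<Rightarrow> nat \<Rightarrow> nat" where
  "right_nb n v = Suc v mod n"

definition lview_at :: "nat \<Rightarrow> (nat \<Rightarrow> real) \<Rightarrow> nat set \<Rightarrow> nat \<Rightarrow> lview" where
  "lview_at n w E v = (w (left_nb n v), w v, left_nb n v \<in> E, right_nb n v \<in> E)"

definition view_of :: "nat \<Rightarrow> (nat \<Rightarrow> real) \<Rightarrow> state \<Rightarrow> view" where
  "view_of n w st = (case st of (ps, E, c) \<Rightarrow> map (lview_at n w E) ps)"

(* invalid moves (non-existing agent) are no-ops *)
definition step :: "nat \<Rightarrow> (nat \<Rightarrow> real) \<Rightarrow> real \<Rightarrow> move \<Rightarrow> state \<Rightarrow> state" where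
  "step n w q m st = (case st of (ps, E, c) \<Rightarrow>
     (case m of
        Invoke \<Rightarrow> (ps @ [0], insert 0 E, c + q)
      | Go i d \<Rightarrow>
          (if i < length ps then
             (let v = ps ! i;
                  v' = (if d then right_nb n v else left_nb n v);
                  e = (if d then w v else w v')
              in (ps[i := v'], insert v' E, c + e))
           else (ps, E, c))))"

definition init_state :: state where
  "init_state = ([], {}, 0)"

definition explored :: "nat \<Rightarrow> state \<Rightarrow> bool" where
  "explored n st \<longleftrightarrow> {..<n} \<subseteq> fst (snd st)"

definition cost_of :: "state \<Rightarrow> real" where
  "cost_of st = snd (snd st)"

fun exec :: "strategy \<Rightarrow> nat \<Rightarrow> (nat \<Rightarrow> real) \<Rightarrow> real \<Rightarrow> nat \<Rightarrow> state \<times> view list" where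
  "exec S n w q 0 = (init_state, [view_of n w init_state])"
| "exec S n w q (Suc t) =
     (let (st, h) = exec S n w q t;
          st' = step n w q (S h) st
      in (st', h @ [view_of n w st']))"

definition online_explores :: "strategy \<Rightarrow> nat \<Rightarrow> (nat \<Rightarrow> real) \<Rightarrow> real \<Rightarrow> bool" where
  "online_explores S n w q \<longleftrightarrow> (\<exists>t. explored n (fst (exec S n w q t)))"

definition online_cost :: "strategy \<Rightarrow> nat \<Rightarrow> (nat \<Rightarrow> real) \<Rightarrow> real \<Rightarrow> real" where
  "online_cost S n w q =
     cost_of (fst (exec S n w q (LEAST t. explored n (fst (exec S n w q t)))))"

(* off-line: any finite sequence of moves chosen with full knowledge *)
definition run_moves :: "nat \<Rightarrow> (nat \<Rightarrow> real) \<Rightarrow> real \<Rightarrow> move list \<Rightarrow> state" where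
  "run_moves n w q ms = fold (step n w q) ms init_state"

definition opt_cost :: "nat \<Rightarrow> (nat \<Rightarrow> real) \<Rightarrow> real \<Rightarrow> real" where
  "opt_cost n w q = Inf {cost_of (run_moves n w q ms) | ms. explored n (run_moves n w q ms)}"

definition ratio :: "strategy \<Rightarrow> nat \<Rightarrow> (nat \<Rightarrow> real) \<Rightarrow> real \<Rightarrow> ereal" where
  "ratio S n w q = (if online_explores S n w q
                    then ereal (online_cost S n w q / opt_cost n w q) else \<infinity>)"

definition competitive_ratio :: "strategy \<Rightarrow> real \<Rightarrow> ereal" where
  "competitive_ratio S q = (SUP C \<in> {(n, w). is_ring n w}. ratio S (fst C) (snd C) q)"

end

theory Submission
  imports Defs
begin

(* The adversary starts with a ring of 2 K + 2 vertices whose edges all weigh e = q / (K + 5).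
   While a single agent explores, it has seen an arc of fewer than K vertices on each side of the
   homebase and has paid for reaching both ends of it.  A strategy that never leaves this phase
   never explores the ring.  When it leaves, the adversary fixes the unseen weights consistently
   with everything revealed so far:
   - if a second agent is invoked, the unseen edges become almost free, so a single sweep is
     nearly optimal while the strategy has already paid two invocations;
   - if the agent reaches distance K on one side, the next edge gets weight 2 q, so the vertex
     just beyond the explored arc on the other side is still far from every present or future
     agent, while the optimum explores that other side first and then comes back.
   The remaining on-line cost is bounded below by a potential: the least value, over the agents
   and a fresh one, of a 1-Lipschitz function vanishing at the target vertex.  Every case gives
   ratio at least 3/2 - 15 e / (2 q), which tends to 3/2 as K grows. *)

section \<open>Runs of a strategy\<close>

lemma step_simps:
  "step n w q Invoke (ps, E, c) = (ps @ [0], insert 0 E, c + q)"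
  "step n w q (Go i d) (ps, E, c) =
     (if i < length ps then
        (ps[i := (if d then right_nb n (ps ! i) else left_nb n (ps ! i))],
         insert (if d then right_nb n (ps ! i) else left_nb n (ps ! i)) E,
         c + (if d then w (ps ! i) else w (left_nb n (ps ! i))))
      else (ps, E, c))"
  by (auto simp: step_def Let_def)

lemma right_nb_less: "0 < n \<Longrightarrow> right_nb n v < n"
  by (simp add: right_nb_def)

lemma left_nb_less: "0 < n \<Longrightarrow> left_nb n v < n"
  by (simp add: left_nb_def)

lemma right_nb_Suc: "Suc p < n \<Longrightarrow> right_nb n p = Suc p"
  by (simp add: right_nb_def)

lemma right_nb_last: "Suc p = n \<Longrightarrow> right_nb n p = 0"
  by (simp add: right_nb_def)

lemma left_nb_Suc: "Suc p < n \<Longrightarrow> left_nb n (Suc p) = p"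
  by (simp add: left_nb_def)

lemma left_nb_0: "0 < n \<Longrightarrow> left_nb n 0 = n - 1"
  by (simp add: left_nb_def)

lemma right_nb_left_nb: "v < n \<Longrightarrow> right_nb n (left_nb n v) = v"
  by (cases v) (auto simp: left_nb_0 left_nb_Suc right_nb_Suc right_nb_last)

abbreviation state_at :: "strategy \<Rightarrow> nat \<Rightarrow> (nat \<Rightarrow> real) \<Rightarrow> real \<Rightarrow> nat \<Rightarrow> state" where
  "state_at S n w q t \<equiv> fst (exec S n w q t)"

abbreviation history :: "strategy \<Rightarrow> nat \<Rightarrow> (nat \<Rightarrow> real) \<Rightarrow> real \<Rightarrow> nat \<Rightarrow> view list" where
  "history S n w q t \<equiv> snd (exec S n w q t)"

lemma exec_Suc_eq:
  "exec S n w q (Suc t) =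
     (step n w q (S (history S n w q t)) (state_at S n w q t),
      history S n w q t @ [view_of n w (step n w q (S (history S n w q t)) (state_at S n w q t))])"
  by (simp add: case_prod_beta Let_def)

declare exec.simps(2) [simp del]

lemma state_at_Suc:
  "state_at S n w q (Suc t) = step n w q (S (history S n w q t)) (state_at S n w q t)"
  by (simp add: exec_Suc_eq)

definition agents_on_explored :: "nat \<Rightarrow> state \<Rightarrow> bool" where
  "agents_on_explored n st \<longleftrightarrow>
     (\<forall>p\<in>set (fst st). p < n) \<and> set (fst st) \<subseteq> fst (snd st)"

lemma explored_set_step: "fst (snd st) \<subseteq> fst (snd (step n w q m st))"
  by (cases st; cases m) (auto simp: step_simps)

lemma agents_on_explored_step:
  assumes "0 < n" "agents_on_explored n st"
  shows "agents_on_explored n (step n w q m st)"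
proof -
  obtain ps E c where st: "st = (ps, E, c)" by (cases st)
  show ?thesis
  proof (cases m)
    case (Go i d)
    let ?v = "if d then right_nb n (ps ! i) else left_nb n (ps ! i)"
    have "set (ps[i := ?v]) \<subseteq> insert ?v (set ps)" by (rule set_update_subset_insert)
    moreover have "?v < n" using assms by (simp add: right_nb_less left_nb_less)
    ultimately show ?thesis using assms by (auto simp: st step_simps agents_on_explored_def Go)
  qed (use assms in \<open>auto simp: st step_simps agents_on_explored_def\<close>)
qed

lemma agents_on_explored_state_at: "0 < n \<Longrightarrow> agents_on_explored n (state_at S n w q t)"
proof (induction t)
  case 0
  then show ?case by (simp add: init_state_def agents_on_explored_def)
next
  case (Suc t)
  then show ?case by (simp add: state_at_Suc agents_on_explored_step)
qed

lemma explored_set_mono: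
  "t1 \<le> t2 \<Longrightarrow> fst (snd (state_at S n w q t1)) \<subseteq> fst (snd (state_at S n w q t2))"
  by (rule lift_Suc_mono_le[of "\<lambda>t. fst (snd (state_at S n w q t))"])
     (simp_all add: state_at_Suc explored_set_step)

definition incident_weights_agree ::
    "nat \<Rightarrow> nat set \<Rightarrow> (nat \<Rightarrow> real) \<Rightarrow> (nat \<Rightarrow> real) \<Rightarrow> bool" where
  "incident_weights_agree n V w1 w2 \<longleftrightarrow>
     (\<forall>v\<in>V. w1 v = w2 v \<and> w1 (left_nb n v) = w2 (left_nb n v))"

lemma step_cong_weights:
  assumes "set ps \<subseteq> V" "incident_weights_agree n V w1 w2"
  shows "step n w1 q m (ps, E, c) = step n w2 q m (ps, E, c)"
proof (cases m)
  case (Go i d)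
  have "ps ! i \<in> V" if "i < length ps" using assms(1) that by auto
  then show ?thesis using assms(2) by (auto simp: Go step_simps incident_weights_agree_def)
qed (simp add: step_simps)

lemma view_of_cong_weights:
  "set ps \<subseteq> V \<Longrightarrow> incident_weights_agree n V w1 w2 \<Longrightarrow>
   view_of n w1 (ps, E, c) = view_of n w2 (ps, E, c)"
  by (auto simp: view_of_def lview_at_def incident_weights_agree_def)

lemma exec_cong_weights:
  assumes agree: "incident_weights_agree n V w1 w2"
    and placed: "\<forall>s\<le>t. set (fst (state_at S n w1 q s)) \<subseteq> V"
  shows "exec S n w2 q t = exec S n w1 q t"
  using placed
proof (induction t)
  case 0
  then show ?case using view_of_cong_weights[OF _ agree, of "[]"] by (simp add: init_state_def)
next
  case (Suc t)
  then have IH: "exec S n w2 q t = exec S n w1 q t" by simp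
  obtain ps E c where st: "state_at S n w1 q t = (ps, E, c)" by (cases "state_at S n w1 q t")
  obtain ps' E' c' where st': "step n w1 q (S (history S n w1 q t)) (ps, E, c) = (ps', E', c')"
    by (cases "step n w1 q (S (history S n w1 q t)) (ps, E, c)")
  have "set ps \<subseteq> V" using Suc.prems[rule_format, of t] st by simp
  then have "step n w2 q m (ps, E, c) = step n w1 q m (ps, E, c)" for m
    using step_cong_weights[OF _ agree] by simp
  moreover have "set ps' \<subseteq> V"
    using Suc.prems[rule_format, of "Suc t"] st st' by (simp add: state_at_Suc)
  ultimately show ?case
    using IH st st' view_of_cong_weights[OF _ agree, of ps' E' c'] by (simp add: exec_Suc_eq)
qed

lemma exec_cong_weights_explored:
  assumes "0 < n" "incident_weights_agree n (fst (snd (state_at S n w1 q t))) w1 w2"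
  shows "exec S n w2 q t = exec S n w1 q t"
proof (rule exec_cong_weights[OF assms(2)], intro allI impI)
  fix s assume "s \<le> t"
  have "set (fst (state_at S n w1 q s)) \<subseteq> fst (snd (state_at S n w1 q s))"
    using agents_on_explored_state_at[OF assms(1)] by (simp add: agents_on_explored_def)
  also have "\<dots> \<subseteq> fst (snd (state_at S n w1 q t))" using \<open>s \<le> t\<close> by (rule explored_set_mono)
  finally show "set (fst (state_at S n w1 q s)) \<subseteq> fst (snd (state_at S n w1 q t))" .
qed

lemma state_at_Suc_cong_weights:
  "0 < n \<Longrightarrow> incident_weights_agree n (fst (snd (state_at S n w1 q t))) w1 w2 \<Longrightarrow>
   state_at S n w2 q (Suc t) = step n w2 q (S (history S n w1 q t)) (state_at S n w1 q t)"
  using exec_cong_weights_explored by (metis state_at_Suc)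

section \<open>A potential bounding the remaining on-line cost\<close>

definition edge_lipschitz :: "nat \<Rightarrow> (nat \<Rightarrow> real) \<Rightarrow> (nat \<Rightarrow> real) \<Rightarrow> bool" where
  "edge_lipschitz n w f \<longleftrightarrow> (\<forall>v<n. \<bar>f v - f (right_nb n v)\<bar> \<le> w v)"

(* If f is 1-Lipschitz for the edge weights and vanishes at y, then an agent at p still has to pay
   at least f p to reach y, and a new agent at least q + f 0.  The minimum of these is a potential:
   cost plus potential never decreases along a run. *)
definition visit_bound :: "real \<Rightarrow> (nat \<Rightarrow> real) \<Rightarrow> nat \<Rightarrow> state \<Rightarrow> real" where
  "visit_bound q f y st =
     (if y \<in> fst (snd st) then 0 else Min (insert (q + f 0) (f ` set (fst st))))"

lemma edge_lipschitz_left: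
  assumes "edge_lipschitz n w f" "v < n"
  shows "\<bar>f v - f (left_nb n v)\<bar> \<le> w (left_nb n v)"
  using assms right_nb_left_nb[OF assms(2)] left_nb_less[of n v]
  by (auto simp: edge_lipschitz_def abs_minus_commute)

lemma visit_bound_le:
  "y \<notin> E \<Longrightarrow> x \<in> insert (q + f 0) (f ` set ps) \<Longrightarrow> visit_bound q f y (ps, E, c) \<le> x"
  by (simp add: visit_bound_def)

lemma visit_bound_geI:
  "y \<notin> E \<Longrightarrow> (\<And>a. a \<in> insert (q + f 0) (f ` set ps) \<Longrightarrow> x \<le> a) \<Longrightarrow>
   x \<le> visit_bound q f y (ps, E, c)"
  by (simp add: visit_bound_def)

lemma visit_bound_Invoke:
  assumes "0 \<le> q" "f y = 0"
  shows "visit_bound q f y (ps, E, c) \<le> visit_bound q f y (ps @ [0], insert 0 E, c') + q"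
proof (cases "y \<in> E")
  case False
  let ?b = "visit_bound q f y (ps, E, c)"
  have b0: "?b \<le> q + f 0" and bp: "\<And>p. p \<in> set ps \<Longrightarrow> ?b \<le> f p"
    using visit_bound_le[OF False] by simp_all
  show ?thesis
  proof (cases "y = 0")
    case False
    have "?b - q \<le> f p" if "p \<in> set ps" for p using bp[OF that] assms(1) by linarith
    with \<open>y \<notin> E\<close> False have "?b - q \<le> visit_bound q f y (ps @ [0], insert 0 E, c')"
      by (intro visit_bound_geI) (use b0 assms in auto)
    then show ?thesis by simp
  qed (use b0 assms in \<open>simp add: visit_bound_def\<close>)
qed (use assms in \<open>simp add: visit_bound_def\<close>)

lemma visit_bound_move:
  assumes "i < length ps" "\<bar>f (ps ! i) - f v\<bar> \<le> \<delta>" "f y = 0"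
  shows "visit_bound q f y (ps, E, c) \<le> visit_bound q f y (ps[i := v], insert v E, c') + \<delta>"
proof (cases "y \<in> E")
  case False
  let ?b = "visit_bound q f y (ps, E, c)"
  have b0: "?b \<le> q + f 0" and bp: "\<And>p. p \<in> set ps \<Longrightarrow> ?b \<le> f p"
    using visit_bound_le[OF False] by simp_all
  have bv: "?b - \<delta> \<le> f v" using bp[OF nth_mem[OF assms(1)]] assms(2) by (simp add: abs_le_iff)
  show ?thesis
  proof (cases "y = v")
    case False
    have "?b - \<delta> \<le> visit_bound q f y (ps[i := v], insert v E, c')"
    proof (rule visit_bound_geI)
      fix a assume "a \<in> insert (q + f 0) (f ` set (ps[i := v]))"
      then have "a = q + f 0 \<or> a = f v \<or> (\<exists>p\<in>set ps. a = f p)"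
        using set_update_subset_insert[of ps i v] by auto
      then show "?b - \<delta> \<le> a" using b0 bp bv assms(2) by force
    qed (use False \<open>y \<notin> E\<close> in simp)
    then show ?thesis by simp
  qed (use bv assms(3) in \<open>simp add: visit_bound_def\<close>)
qed (use assms(2) in \<open>simp add: visit_bound_def\<close>)

lemma visit_bound_step:
  assumes "agents_on_explored n st" "0 \<le> q" "edge_lipschitz n w f" "f y = 0"
  shows "visit_bound q f y st \<le>
           visit_bound q f y (step n w q m st) + (cost_of (step n w q m st) - cost_of st)"
proof -
  obtain ps E c where st: "st = (ps, E, c)" by (cases st)
  show ?thesis
  proof (cases m)
    case Invoke
    then show ?thesis
      using visit_bound_Invoke[where f = f and y = y, OF assms(2,4)]
        by (simp add: st step_simps cost_of_def)
  next
    case (Go i d)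
    show ?thesis
    proof (cases "i < length ps")
      case True
      then have "ps ! i < n" using assms(1) by (simp add: st agents_on_explored_def)
      then have "\<bar>f (ps ! i) - f (if d then right_nb n (ps ! i) else left_nb n (ps ! i))\<bar>
                   \<le> (if d then w (ps ! i) else w (left_nb n (ps ! i)))"
        using assms(3) edge_lipschitz_left by (auto simp: edge_lipschitz_def)
      from visit_bound_move[OF True this assms(4)] True show ?thesis
        by (simp add: st Go step_simps cost_of_def)
    qed (simp add: st Go step_simps cost_of_def)
  qed
qed

lemma cost_plus_visit_bound_mono:
  assumes "0 < n" "0 \<le> q" "edge_lipschitz n w f" "f y = 0" "t1 \<le> t2"
  shows "cost_of (state_at S n w q t1) + visit_bound q f y (state_at S n w q t1)
       \<le> cost_of (state_at S n w q t2) + visit_bound q f y (state_at S n w q t2)"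
proof -
  let ?g = "\<lambda>t. cost_of (state_at S n w q t) + visit_bound q f y (state_at S n w q t)"
  have "?g t \<le> ?g (Suc t)" for t
    using visit_bound_step[OF agents_on_explored_state_at[OF assms(1), of S w q t] assms(2-4),
        of "S (history S n w q t)"]
    by (simp add: state_at_Suc)
  from lift_Suc_mono_le[of ?g, OF this assms(5)] show ?thesis .
qed

lemma online_cost_eq_state_at:
  assumes "online_explores S n w q"
  obtains T where "explored n (state_at S n w q T)"
    "online_cost S n w q = cost_of (state_at S n w q T)"
proof
  show "explored n (state_at S n w q (LEAST t. explored n (state_at S n w q t)))"
    using assms unfolding online_explores_def by (rule LeastI_ex)
qed (simp add: online_cost_def)

lemma online_cost_ge_visit_bound:
  assumes "0 < n" "0 \<le> q" "edge_lipschitz n w f" "f y = 0" "y < n"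
    and unvisited: "y \<notin> fst (snd (state_at S n w q t))" and "online_explores S n w q"
  shows "cost_of (state_at S n w q t) + visit_bound q f y (state_at S n w q t)
           \<le> online_cost S n w q"
proof -
  obtain T where T: "explored n (state_at S n w q T)"
    "online_cost S n w q = cost_of (state_at S n w q T)"
    using online_cost_eq_state_at[OF assms(7)] by blast
  then have visited: "y \<in> fst (snd (state_at S n w q T))"
    using assms(5) by (auto simp: explored_def)
  have "t \<le> T"
  proof (rule ccontr)
    assume "\<not> t \<le> T"
    then have "fst (snd (state_at S n w q T)) \<subseteq> fst (snd (state_at S n w q t))"
      by (intro explored_set_mono) simp
    with visited unvisited show False by blast
  qed
  from cost_plus_visit_bound_mono[OF assms(1-4) this, of S] visited T(2) show ?thesis
    by (simp add: visit_bound_def)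
qed

lemma online_cost_ge_cost_at:
  assumes "0 < n" "0 \<le> q" "\<forall>i<n. 0 \<le> w i" "y < n"
    and "y \<notin> fst (snd (state_at S n w q t))" and "online_explores S n w q"
  shows "cost_of (state_at S n w q t) \<le> online_cost S n w q"
proof -
  let ?st = "state_at S n w q t"
  have "edge_lipschitz n w (\<lambda>_. 0)" using assms(3) by (simp add: edge_lipschitz_def)
  then have "cost_of ?st + visit_bound q (\<lambda>_. 0) y ?st \<le> online_cost S n w q"
    by (rule online_cost_ge_visit_bound[OF assms(1,2) _ _ assms(4-6)]) simp
  moreover have "0 \<le> visit_bound q (\<lambda>_. 0) y ?st" using assms(2) by (simp add: visit_bound_def)
  ultimately show ?thesis by linarith
qed

section \<open>Off-line strategies\<close>

definition invocation_paid :: "nat \<Rightarrow> real \<Rightarrow> state \<Rightarrow> bool" where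
  "invocation_paid n q st \<longleftrightarrow> (\<forall>p\<in>set (fst st). p < n) \<and>
     (fst st = [] \<longrightarrow> fst (snd st) = {} \<and> cost_of st = 0) \<and> (fst st \<noteq> [] \<longrightarrow> q \<le> cost_of st)"

lemma invocation_paid_step:
  assumes "is_ring n w" "0 < q" "invocation_paid n q st"
  shows "invocation_paid n q (step n w q m st)"
proof -
  obtain ps E c where st: "st = (ps, E, c)" by (cases st)
  have n: "0 < n" and w: "\<forall>i<n. 0 \<le> w i" using assms(1) by (auto simp: is_ring_def less_imp_le)
  show ?thesis
  proof (cases m)
    case Invoke
    have "0 \<le> c"
      using assms(2,3) by (cases "ps = []") (auto simp: st invocation_paid_def cost_of_def)
    then show ?thesis
      using assms(2,3) n by (auto simp: st Invoke step_simps invocation_paid_def cost_of_def)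
  next
    case (Go i d)
    show ?thesis
    proof (cases "i < length ps")
      case True
      let ?v = "if d then right_nb n (ps ! i) else left_nb n (ps ! i)"
      have "set (ps[i := ?v]) \<subseteq> insert ?v (set ps)" by (rule set_update_subset_insert)
      moreover have "?v < n" "0 \<le> w (ps ! i)" "0 \<le> w (left_nb n (ps ! i))"
        using n assms(3) True w by (auto simp: st invocation_paid_def right_nb_less left_nb_less)
      ultimately show ?thesis using assms(3) True
        by (auto simp: st Go step_simps invocation_paid_def cost_of_def)
    qed (use assms(3) in \<open>simp add: st Go step_simps\<close>)
  qed
qed

lemma cost_of_explored_run_ge:
  assumes "is_ring n w" "0 < q" "explored n (run_moves n w q ms)"
  shows "q \<le> cost_of (run_moves n w q ms)"
proof -
  have "invocation_paid n q (fold (step n w q) ms st)" if "invocation_paid n q st" for st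
    using that by (induction ms arbitrary: st) (simp_all add: invocation_paid_step[OF assms(1,2)])
  moreover have "invocation_paid n q init_state"
    by (simp add: init_state_def invocation_paid_def cost_of_def)
  ultimately have "invocation_paid n q (run_moves n w q ms)" by (simp add: run_moves_def)
  moreover have "0 \<in> fst (snd (run_moves n w q ms))"
    using assms(1,3) by (auto simp: explored_def is_ring_def)
  ultimately show ?thesis by (auto simp: invocation_paid_def)
qed

lemma opt_cost_bounds:
  assumes "is_ring n w" "0 < q" "explored n (run_moves n w q ms)"
  shows "q \<le> opt_cost n w q" "opt_cost n w q \<le> cost_of (run_moves n w q ms)"
proof -
  let ?A = "{cost_of (run_moves n w q ms) | ms. explored n (run_moves n w q ms)}"
  have lower: "\<And>a. a \<in> ?A \<Longrightarrow> q \<le> a" using cost_of_explored_run_ge[OF assms(1,2)] by blast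
  show "q \<le> opt_cost n w q" unfolding opt_cost_def
    by (rule cInf_greatest) (use assms(3) lower in blast)+
  have "bdd_below ?A" by (rule bdd_belowI[of _ q]) (rule lower)
  then show "opt_cost n w q \<le> cost_of (run_moves n w q ms)" unfolding opt_cost_def
    using assms(3) by (auto intro!: cInf_lower)
qed

lemma fold_walk_right:
  "j + k < n \<Longrightarrow> fold (step n w q) (replicate k (Go 0 True)) ([j], E, c)
     = ([j + k], E \<union> {j<..j + k}, c + (\<Sum>i=j..<j + k. w i))"
proof (induction k)
  case (Suc k)
  have "fold (step n w q) (replicate (Suc k) (Go 0 True)) ([j], E, c)
      = step n w q (Go 0 True) ([j + k], E \<union> {j<..j + k}, c + (\<Sum>i=j..<j + k. w i))"
    using Suc by (simp add: replicate_append_same[symmetric])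
  also have "\<dots> = ([j + Suc k], E \<union> {j<..j + Suc k}, c + (\<Sum>i=j..<j + Suc k. w i))"
    using Suc.prems by (auto simp: step_simps right_nb_Suc)
  finally show ?case .
qed simp

lemma fold_walk_left:
  "j + k < n \<Longrightarrow> fold (step n w q) (replicate k (Go 0 False)) ([j + k], E, c)
     = ([j], E \<union> {j..<j + k}, c + (\<Sum>i=j..<j + k. w i))"
proof (induction k arbitrary: E c)
  case (Suc k)
  have "fold (step n w q) (replicate (Suc k) (Go 0 False)) ([j + Suc k], E, c)
      = fold (step n w q) (replicate k (Go 0 False)) ([j + k], insert (j + k) E, c + w (j + k))"
    using Suc.prems by (simp add: step_simps left_nb_Suc)
  also have "\<dots> = ([j], E \<union> {j..<j + Suc k}, c + (\<Sum>i=j..<j + Suc k. w i))"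
    using Suc by (auto simp: add.commute)
  finally show ?case .
qed simp

lemma run_sweep:
  assumes "0 < n"
  shows "run_moves n w q (Invoke # replicate (n - 1) (Go 0 True))
           = ([n - 1], {0} \<union> {0<..n - 1}, q + (\<Sum>i=0..<n - 1. w i))"
    and "explored n (run_moves n w q (Invoke # replicate (n - 1) (Go 0 True)))"
proof -
  show run: "run_moves n w q (Invoke # replicate (n - 1) (Go 0 True))
           = ([n - 1], {0} \<union> {0<..n - 1}, q + (\<Sum>i=0..<n - 1. w i))"
    using fold_walk_right[of 0 "n - 1" n w q "{0}" q] assms
    by (simp add: run_moves_def init_state_def step_simps)
  show "explored n (run_moves n w q (Invoke # replicate (n - 1) (Go 0 True)))"
    unfolding run explored_def by auto
qed

lemma q_le_opt_cost: "is_ring n w \<Longrightarrow> 0 < q \<Longrightarrow> q \<le> opt_cost n w q"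
  by (rule opt_cost_bounds(1), assumption+, rule run_sweep(2)) (simp add: is_ring_def)

lemma opt_cost_le_sweep:
  assumes "is_ring n w" "0 < q"
  shows "opt_cost n w q \<le> q + (\<Sum>i=0..<n - 1. w i)"
  using opt_cost_bounds(2)[OF assms run_sweep(2)] run_sweep(1) assms(1)
  by (simp add: is_ring_def cost_of_def)

(* One agent walks right to j, back to the homebase, and on to the left up to j + 1. *)
lemma opt_cost_le_zigzag_right:
  assumes "is_ring n w" "0 < q" "Suc j < n"
  shows "opt_cost n w q \<le> q + 2 * (\<Sum>i=0..<j. w i) + (\<Sum>i=Suc j..<n. w i)"
proof -
  obtain k where n: "n = Suc (Suc j + k)" using assms(3) less_imp_Suc_add by blast
  let ?ms = "Invoke # replicate j (Go 0 True) @ replicate j (Go 0 False) @ [Go 0 False]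
    @ replicate k (Go 0 False)"
  have run: "run_moves n w q ?ms =
      ([Suc j], {0, Suc j + k} \<union> {0<..j} \<union> {0..<j} \<union> {Suc j..<Suc j + k},
      q + (\<Sum>i=0..<j. w i) + (\<Sum>i=0..<j. w i) + w (Suc j + k) + (\<Sum>i=Suc j..<Suc j + k. w i))"
    using fold_walk_right[of 0 j n w q] fold_walk_left[of 0 j n w q]
      fold_walk_left[of "Suc j" k n w q]
    unfolding n
      by (auto simp: run_moves_def init_state_def step_simps left_nb_0 simp del: fold_replicate)
  have "explored n (run_moves n w q ?ms)" unfolding explored_def run using n by auto
  from opt_cost_bounds(2)[OF assms(1,2) this] show ?thesis
    unfolding run cost_of_def by (simp add: n sum.atLeastLessThan_Suc[of "Suc j" "Suc (j + k)"])
qed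

(* One agent walks left to j, back to the homebase, and on to the right up to j - 1. *)
lemma opt_cost_le_zigzag_left:
  assumes "is_ring n w" "0 < q" "0 < j" "j < n"
  shows "opt_cost n w q \<le> q + 2 * (\<Sum>i=j..<n. w i) + (\<Sum>i=0..<j - 1. w i)"
proof -
  obtain k where n: "n = Suc (j + k)" using assms(4) less_imp_Suc_add by blast
  let ?ms = "[Invoke, Go 0 False] @ replicate k (Go 0 False) @ replicate k (Go 0 True) @ [Go 0 True]
    @ replicate (j - 1) (Go 0 True)"
  have run: "run_moves n w q ?ms = ([j - 1], {0, j + k} \<union> {j..<j + k} \<union> {j<..j + k} \<union> {0<..j - 1},
      q + w (j + k) + (\<Sum>i=j..<j + k. w i) + (\<Sum>i=j..<j + k. w i) + w (j + k) + (\<Sum>i=0..<j - 1. w i))"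
    using fold_walk_left[of j k n w q] fold_walk_right[of j k n w q]
      fold_walk_right[of 0 "j - 1" n w q]
    unfolding n by (auto simp: run_moves_def init_state_def step_simps left_nb_0 right_nb_last
      simp del: fold_replicate)
  have "explored n (run_moves n w q ?ms)" unfolding explored_def run using n assms(3) by auto
  from opt_cost_bounds(2)[OF assms(1,2) this] show ?thesis
    unfolding run cost_of_def by (simp add: n sum.atLeastLessThan_Suc[of j "j + k"])
qed

lemma ratio_ge_of_bounds:
  assumes "is_ring n w" "0 < q" "0 \<le> D" "opt_cost n w q \<le> B" "3 * B - D \<le> 2 * A"
    and "online_explores S n w q \<Longrightarrow> A \<le> online_cost S n w q"
  shows "ereal (3/2 - D / (2 * q)) \<le> ratio S n w q"
proof (cases "online_explores S n w q")
  case True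
  let ?o = "opt_cost n w q"
  have o: "q \<le> ?o" using q_le_opt_cost[OF assms(1,2)] .
  then have "D / 2 \<le> D / (2 * q) * ?o"
    using assms(2,3) by (simp add: field_simps mult_left_mono)
  then have "(3/2 - D / (2 * q)) * ?o \<le> online_cost S n w q"
    using assms(4-6) True by (simp add: algebra_simps)
  then have "3/2 - D / (2 * q) \<le> online_cost S n w q / ?o"
    using assms(2) o by (simp add: pos_le_divide_eq)
  then show ?thesis using True by (simp add: ratio_def)
qed (simp add: ratio_def)

lemma sum_le_two_valued:
  fixes w :: "nat \<Rightarrow> real"
  assumes "finite A" "\<And>i. i \<in> A \<Longrightarrow> w i \<le> (if P i then e else d)" "0 \<le> e" "0 \<le> d"
  shows "sum w A \<le> e * card {i\<in>A. P i} + d * card A"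
proof -
  have "sum w A \<le> (\<Sum>i\<in>A. (if P i then e else 0) + d)"
    by (rule sum_mono) (use assms(2-4) in \<open>fastforce split: if_splits\<close>)
  also have "\<dots> = e * card {i\<in>A. P i} + d * card A"
    using sum.inter_filter[OF assms(1), of "\<lambda>_. e" P] by (simp add: sum.distrib mult.commute)
  finally show ?thesis .
qed

section \<open>The single-agent phase on the uniform ring\<close>

definition home_arc :: "nat \<Rightarrow> nat \<Rightarrow> nat \<Rightarrow> nat set" where
  "home_arc n R L = {..R} \<union> {n - L..<n}"

(* On the ring with all weights e, a single agent that has explored home_arc n R L has paid at least
   e * (2 * L + 2 * R - d) besides the invocation, where d is its distance to the homebase within
   the arc: it has visited both ends of the arc and come back from one of them. *)
definition single_agent_phase :: "nat \<Rightarrow> nat \<Rightarrow> real \<Rightarrow> real \<Rightarrow> state \<Rightarrow> bool" where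
  "single_agent_phase n K q e st \<longleftrightarrow> st = ([], {}, 0) \<or>
     (\<exists>p R L c. st = ([p], home_arc n R L, c) \<and> R < K \<and> L < K \<and>
       (p \<le> R \<and> q + e * real (2 * L + 2 * R - p) \<le> c \<or>
        n - L \<le> p \<and> p < n \<and> q + e * real (2 * L + 2 * R - (n - p)) \<le> c))"

definition at_right_frontier :: "nat \<Rightarrow> nat \<Rightarrow> real \<Rightarrow> real \<Rightarrow> state \<Rightarrow> bool" where
  "at_right_frontier n K q e st \<longleftrightarrow>
     (\<exists>L c. st = ([K - 1], home_arc n (K - 1) L, c) \<and> L < K \<and> q + e * real (2 * L + K - 1) \<le> c)"

definition at_left_frontier :: "nat \<Rightarrow> nat \<Rightarrow> real \<Rightarrow> real \<Rightarrow> state \<Rightarrow> bool" where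
  "at_left_frontier n K q e st \<longleftrightarrow>
     (\<exists>R c. st = ([n - (K - 1)], home_arc n R (K - 1), c) \<and> R < K \<and>
       q + e * real (K - 1 + 2 * R) \<le> c)"

lemma phaseI_right:
  "p \<le> R \<Longrightarrow> R < K \<Longrightarrow> L < K \<Longrightarrow> q + e * real (2 * L + 2 * R - p) \<le> c \<Longrightarrow>
   single_agent_phase n K q e ([p], home_arc n R L, c)"
  unfolding single_agent_phase_def by blast

lemma phaseI_left:
  "n - L \<le> p \<Longrightarrow> p < n \<Longrightarrow> R < K \<Longrightarrow> L < K \<Longrightarrow> q + e * real (2 * L + 2 * R - (n - p)) \<le> c \<Longrightarrow>
   single_agent_phase n K q e ([p], home_arc n R L, c)"
  unfolding single_agent_phase_def by blast

lemma phase_cost_step: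
  assumes "q + e * real X \<le> c" "X' \<le> X + 1" "0 < e"
  shows "q + e * real X' \<le> c + e"
proof -
  have "e * real X' \<le> e * (real X + 1)" using assms(2,3) by (simp add: mult_left_mono)
  then show ?thesis using assms(1) by (simp add: algebra_simps)
qed

locale uniform_ring =
  fixes n K :: nat and q e :: real
  assumes K_ge: "2 \<le> K" and n_ge: "2 * K + 2 \<le> n" and e_pos: "0 < e" and q_pos: "0 < q"
begin

lemma n_pos: "0 < n" using n_ge by simp

lemma move_right_on_right:
  assumes "p \<le> R" "R < K" "L < K" "q + e * real (2 * L + 2 * R - p) \<le> c"
  shows "single_agent_phase n K q e (step n (\<lambda>_. e) q (Go 0 True) ([p], home_arc n R L, c)) \<or>
    at_right_frontier n K q e ([p], home_arc n R L, c)"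
proof -
  have pn: "Suc p < n" using assms n_ge by linarith
  have st: "step n (\<lambda>_. e) q (Go 0 True) ([p], home_arc n R L, c) =
      ([Suc p], insert (Suc p) (home_arc n R L), c + e)"
    using pn by (simp add: step_simps right_nb_Suc)
  consider "p < R" | "p = R" "Suc R < K" | "p = R" "Suc R = K" using assms by linarith
  then show ?thesis
  proof cases
    case 1
    have "insert (Suc p) (home_arc n R L) = home_arc n R L" using 1 by (auto simp: home_arc_def)
    moreover have "q + e * real (2 * L + 2 * R - Suc p) \<le> c + e"
      by (rule phase_cost_step[OF assms(4)]) (use 1 e_pos in arith)+
    then have "single_agent_phase n K q e ([Suc p], home_arc n R L, c + e)"
      using assms 1 by (intro phaseI_right) auto
    ultimately show ?thesis using st by simp
  next
    case 2
    have "insert (Suc p) (home_arc n R L) = home_arc n (Suc R) L"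
      using 2 by (auto simp: home_arc_def)
    moreover have "q + e * real (2 * L + 2 * Suc R - Suc p) \<le> c + e"
      by (rule phase_cost_step[OF assms(4)]) (use 2 e_pos in arith)+
    then have "single_agent_phase n K q e ([Suc p], home_arc n (Suc R) L, c + e)"
      using assms 2 by (intro phaseI_right) auto
    ultimately show ?thesis using st by simp
  next
    case 3
    have "R = K - 1" "p = K - 1" using 3 by auto
    moreover have "2 * L + 2 * R - p = 2 * L + K - 1" using 3 by linarith
    ultimately have "at_right_frontier n K q e ([p], home_arc n R L, c)"
      using assms unfolding at_right_frontier_def by auto
    then show ?thesis by simp
  qed
qed

lemma move_right_on_left:
  assumes "n - L \<le> p" "p < n" "R < K" "L < K" "q + e * real (2 * L + 2 * R - (n - p)) \<le> c"
  shows "single_agent_phase n K q e (step n (\<lambda>_. e) q (Go 0 True) ([p], home_arc n R L, c))"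
proof (cases "Suc p = n")
  case True
  have p: "p = n - 1" using True by simp
  have st: "step n (\<lambda>_. e) q (Go 0 True) ([p], home_arc n R L, c) = ([0], home_arc n R L, c + e)"
  proof -
    have "right_nb n p = 0" using p n_pos by (simp add: right_nb_def)
    moreover have "insert 0 (home_arc n R L) = home_arc n R L" by (auto simp: home_arc_def)
    ultimately show ?thesis by (simp add: step_simps)
  qed
  have "q + e * real (2 * L + 2 * R - 0) \<le> c + e"
    by (rule phase_cost_step[OF assms(5)]) (use p e_pos in arith)+
  then have "single_agent_phase n K q e ([0], home_arc n R L, c + e)"
    using assms by (intro phaseI_right) auto
  then show ?thesis using st by simp
next
  case False
  then have pn: "Suc p < n" using assms by linarith
  have st: "step n (\<lambda>_. e) q (Go 0 True) ([p], home_arc n R L, c) =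
      ([Suc p], home_arc n R L, c + e)"
    using pn assms by (auto simp: step_simps right_nb_Suc home_arc_def)
  have "q + e * real (2 * L + 2 * R - (n - Suc p)) \<le> c + e"
    by (rule phase_cost_step[OF assms(5)]) (use pn assms(1-4) e_pos in arith)+
  then have "single_agent_phase n K q e ([Suc p], home_arc n R L, c + e)"
    using assms pn by (intro phaseI_left) auto
  then show ?thesis using st by simp
qed

lemma move_left_on_right:
  assumes "p \<le> R" "R < K" "L < K" "q + e * real (2 * L + 2 * R - p) \<le> c"
  shows "single_agent_phase n K q e (step n (\<lambda>_. e) q (Go 0 False) ([p], home_arc n R L, c))"
proof (cases "p = 0")
  case True
  show ?thesis
  proof (cases "L = 0")
    case L0: True
    have st: "step n (\<lambda>_. e) q (Go 0 False) ([p], home_arc n R L, c) =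
        ([n - 1], home_arc n R 1, c + e)"
      using n_pos True L0 by (auto simp: step_simps left_nb_0 home_arc_def)
    have "q + e * real (2*1 + 2 * R - (n - (n - 1))) \<le> c + e"
      by (rule phase_cost_step[OF assms(4)]) (use True L0 n_pos e_pos in arith)+
    then have "single_agent_phase n K q e ([n - 1], home_arc n R 1, c + e)"
      using assms K_ge n_pos by (intro phaseI_left) auto
    then show ?thesis using st by simp
  next
    case L1: False
    have st: "step n (\<lambda>_. e) q (Go 0 False) ([p], home_arc n R L, c) =
        ([n - 1], home_arc n R L, c + e)"
      using n_pos True L1 by (auto simp: step_simps left_nb_0 home_arc_def)
    have "q + e * real (2 * L + 2 * R - (n - (n - 1))) \<le> c + e"
      by (rule phase_cost_step[OF assms(4)]) (use True L1 n_pos e_pos in arith)+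
    then have "single_agent_phase n K q e ([n - 1], home_arc n R L, c + e)"
      using assms n_pos L1 by (intro phaseI_left) auto
    then show ?thesis using st by simp
  qed
next
  case False
  then obtain p' where p: "p = Suc p'" by (cases p) auto
  have pn: "Suc p' < n" using assms n_ge p by linarith
  have st: "step n (\<lambda>_. e) q (Go 0 False) ([p], home_arc n R L, c) = ([p'], home_arc n R L, c + e)"
    using pn p assms by (auto simp: step_simps left_nb_Suc home_arc_def)
  have "q + e * real (2 * L + 2 * R - p') \<le> c + e"
    by (rule phase_cost_step[OF assms(4)]) (use p e_pos in arith)+
  then have "single_agent_phase n K q e ([p'], home_arc n R L, c + e)"
    using assms p by (intro phaseI_right) auto
  then show ?thesis using st by simp
qed

lemma move_left_on_left:
  assumes "n - L \<le> p" "p < n" "R < K" "L < K" "q + e * real (2 * L + 2 * R - (n - p)) \<le> c"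
  shows "single_agent_phase n K q e (step n (\<lambda>_. e) q (Go 0 False) ([p], home_arc n R L, c)) \<or>
    at_left_frontier n K q e ([p], home_arc n R L, c)"
proof -
  have p0: "p > 0" using assms(1,4) n_ge by linarith
  then obtain p' where p: "p = Suc p'" by (cases p) auto
  have pn: "Suc p' < n" using assms(2) p by linarith
  have st: "step n (\<lambda>_. e) q (Go 0 False) ([p], home_arc n R L, c) =
      ([p'], insert p' (home_arc n R L), c + e)"
    using pn p by (simp add: step_simps left_nb_Suc)
  consider "n - L < p" | "p = n - L" "Suc L < K" | "p = n - L" "Suc L = K"
    using assms(1,4) by linarith
  then show ?thesis
  proof cases
    case 1
    have "insert p' (home_arc n R L) = home_arc n R L" using 1 p pn by (auto simp: home_arc_def)
    moreover have "q + e * real (2 * L + 2 * R - (n - p')) \<le> c + e"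
      by (rule phase_cost_step[OF assms(5)]) (use 1 p assms(1-4) e_pos in arith)+
    then have "single_agent_phase n K q e ([p'], home_arc n R L, c + e)"
      using assms 1 p by (intro phaseI_left) auto
    ultimately show ?thesis using st by simp
  next
    case 2
    have e1: "n - p' = Suc L" "n - p = L" "n - L = Suc p'" "n - Suc L = p'"
      using 2 p pn by linarith+
    have "insert p' (home_arc n R L) = home_arc n R (Suc L)"
      using pn unfolding home_arc_def e1 by auto
    moreover have "q + e * real (2 * Suc L + 2 * R - (n - p')) \<le> c + e"
    proof (rule phase_cost_step[OF assms(5)])
      show "2 * Suc L + 2 * R - (n - p') \<le> 2 * L + 2 * R - (n - p) + 1" unfolding e1 by simp
    qed (rule e_pos)
    then have "single_agent_phase n K q e ([p'], home_arc n R (Suc L), c + e)"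
      using assms(3) 2 pn e1 by (intro phaseI_left) auto
    ultimately show ?thesis using st by simp
  next
    case 3
    have "L = K - 1" "p = n - (K - 1)" using 3 by auto
    moreover have "n - p = L" using 3 assms(4) n_ge by linarith
    moreover have "2 * L + 2 * R - (n - p) = K - 1 + 2 * R" using 3 calculation by linarith
    ultimately have cc: "q + e * real (K - 1 + 2 * R) \<le> c" using assms(5) by metis
    have "at_left_frontier n K q e ([p], home_arc n R L, c)" unfolding at_left_frontier_def
      using cc assms(3) \<open>L = K - 1\<close> \<open>p = n - (K - 1)\<close> by blast
    then show ?thesis by simp
  qed
qed

lemma single_agent_phase_step:
  assumes ph: "single_agent_phase n K q e st"
  shows "single_agent_phase n K q e (step n (\<lambda>_. e) q m st) \<or> (m = Invoke \<and> fst st \<noteq> [])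
    \<or> (m = Go 0 True \<and> at_right_frontier n K q e st)
    \<or> (m = Go 0 False \<and> at_left_frontier n K q e st)"
proof (cases "st = ([],{},0)")
  case True
  show ?thesis
  proof (cases m)
    case Invoke
    have "insert 0 {} = home_arc n 0 0" by (auto simp: home_arc_def)
    moreover have "single_agent_phase n K q e ([0], home_arc n 0 0, 0 + q)"
      using K_ge by (intro phaseI_right) auto
    ultimately show ?thesis using True Invoke by (simp add: step_simps)
  next
    case (Go i d) thus ?thesis using True ph by (simp add: step_simps)
  qed
next
  case False
  then obtain p R L c where st: "st = ([p], home_arc n R L, c)" and RL: "R < K" "L < K" and
    side: "p \<le> R \<and> q + e * real (2 * L + 2 * R - p) \<le> c \<or>
      n - L \<le> p \<and> p < n \<and> q + e * real (2 * L + 2 * R - (n - p)) \<le> c"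
    using ph unfolding single_agent_phase_def by blast
  show ?thesis
  proof (cases m)
    case Invoke thus ?thesis using st by simp
  next
    case (Go i d)
    show ?thesis
    proof (cases "i = 0")
      case False thus ?thesis using ph st Go by (simp add: step_simps)
    next
      case True
      show ?thesis
      proof (cases d)
        case True
        then have mm: "m = Go 0 True" using Go \<open>i = 0\<close> by simp
        show ?thesis unfolding st mm
          using side move_right_on_right[OF _ RL, of p c] move_right_on_left[of L p R c] RL by blast
      next
        case False
        then have mm: "m = Go 0 False" using Go \<open>i = 0\<close> by simp
        show ?thesis unfolding st mm
          using side move_left_on_right[OF _ RL, of p c] move_left_on_left[of L p R c] RL by blast
      qed
    qed
  qed
qed

lemma single_agent_phase_unvisited: "single_agent_phase n K q e st \<Longrightarrow> K \<notin> fst (snd st)"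
  unfolding single_agent_phase_def home_arc_def using n_ge by auto

end

section \<open>The adversary\<close>

definition arc_weights :: "nat \<Rightarrow> nat \<Rightarrow> nat \<Rightarrow> real \<Rightarrow> real \<Rightarrow> nat \<Rightarrow> real" where
  "arc_weights n R L e d i = (if i \<le> R \<or> n - L - 1 \<le> i then e else d)"

lemma incident_weights_agree_home_arc:
  assumes "R < n" "L < n" "\<And>i. i < n \<Longrightarrow> i \<le> R \<or> n - L - 1 \<le> i \<Longrightarrow> w i = e"
  shows "incident_weights_agree n (home_arc n R L) (\<lambda>_. e) w"
  unfolding incident_weights_agree_def
proof
  fix v assume "v \<in> home_arc n R L"
  then have v: "v < n" "v \<le> R \<or> n - L \<le> v" using assms(1) by (auto simp: home_arc_def)
  have "left_nb n v < n \<and> (left_nb n v \<le> R \<or> n - L - 1 \<le> left_nb n v)"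
  proof (cases v)
    case 0
    then show ?thesis using v by (simp add: left_nb_0 diff_le_mono2)
  next
    case (Suc u)
    then show ?thesis using v by (simp add: left_nb_Suc) linarith
  qed
  then show "e = w v \<and> e = w (left_nb n v)" using v assms(3) by force
qed

lemma state_at_Suc_reweighted:
  assumes "state_at S n (\<lambda>_. e) q T = (ps, home_arc n R L, c)" "R < n" "L < n"
    and "\<And>i. i < n \<Longrightarrow> i \<le> R \<or> n - L - 1 \<le> i \<Longrightarrow> w i = e"
  shows "state_at S n w q (Suc T) =
           step n w q (S (history S n (\<lambda>_. e) q T)) (ps, home_arc n R L, c)"
  using state_at_Suc_cong_weights[of n S "\<lambda>_. e" q T w]
    incident_weights_agree_home_arc[OF assms(2-4)]
    assms(1,2) by simp

(* K edges of weight e cost less than one invocation, and the n edges of weight d that the adversary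
   later declares cheap cost at most e altogether. *)
locale ring_adversary = uniform_ring +
  fixes S :: strategy and d :: real
  assumes q_eq: "e * real (K + 5) = q" and d_eq: "d * real n = e" and d_pos: "0 < d"
begin

lemma K_cost_le: "e * real K \<le> q"
  using q_eq e_pos by (simp add: algebra_simps)

lemma d_times_le: "m \<le> n \<Longrightarrow> d * real m \<le> e"
  using d_eq d_pos by (metis mult_left_mono of_nat_le_iff less_imp_le)

lemma is_ring_arc_weights: "is_ring n (arc_weights n R L e d)"
  using n_ge K_ge e_pos d_pos by (auto simp: is_ring_def arc_weights_def)

lemma sum_arc_weights_sweep:
  assumes "R < K" "L < K"
  shows "(\<Sum>i=0..<n - 1. arc_weights n R L e d i) \<le> e * real (R + L + 2)"
proof -
  have "(\<Sum>i=0..<n - 1. arc_weights n R L e d i)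
      \<le> e * card {i\<in>{0..<n - 1}. i \<le> R \<or> n - L - 1 \<le> i} + d * card {0..<n - 1}"
    by (rule sum_le_two_valued) (use e_pos d_pos in \<open>auto simp: arc_weights_def\<close>)
  moreover have "{i\<in>{0..<n - 1}. i \<le> R \<or> n - L - 1 \<le> i} = {0..R} \<union> {n - L - 1..<n - 1}"
    using assms n_ge by auto
  moreover have "card ({0..R} \<union> {n - L - 1..<n - 1}) = R + 1 + L"
    using assms n_ge by (subst card_Un_disjoint) auto
  moreover have "d * card {0..<n - 1} \<le> e" by (simp add: d_times_le)
  ultimately show ?thesis by (simp add: algebra_simps)
qed

lemma single_agent_phase_cost:
  assumes "single_agent_phase n K q e st" "fst st \<noteq> []"
  obtains p R L c where "st = ([p], home_arc n R L, c)" "R < K" "L < K"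
    "q + e * real (R + L + min R L) \<le> c"
proof -
  obtain p R L c where st: "st = ([p], home_arc n R L, c)" and RL: "R < K" "L < K"
    and side: "p \<le> R \<and> q + e * real (2 * L + 2 * R - p) \<le> c \<or>
      n - L \<le> p \<and> p < n \<and> q + e * real (2 * L + 2 * R - (n - p)) \<le> c"
    using assms unfolding single_agent_phase_def by auto
  obtain X where X: "q + e * real X \<le> c" "R + L + min R L \<le> X"
  proof (cases "p \<le> R")
    case True
    moreover have "\<not> n - L \<le> p" using True RL n_ge by linarith
    ultimately have "q + e * real (2 * L + 2 * R - p) \<le> c" using side by blast
    then show thesis by (rule that) (use True in linarith)
  next
    case False
    with side have cost: "q + e * real (2 * L + 2 * R - (n - p)) \<le> c" and "n - L \<le> p" "p < n"
      by auto
    then have "R + L + min R L \<le> 2 * L + 2 * R - (n - p)" by (simp add: min_def) arith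
    with cost show thesis by (rule that)
  qed
  have "e * real (R + L + min R L) \<le> e * real X" using X(2) e_pos by (intro mult_left_mono) auto
  with X(1) have "q + e * real (R + L + min R L) \<le> c" by linarith
  with st RL show thesis by (rule that)
qed

lemma invoke_in_phase_ratio:
  assumes phase: "single_agent_phase n K q e (state_at S n (\<lambda>_. e) q T)"
    and agent: "fst (state_at S n (\<lambda>_. e) q T) \<noteq> []"
    and invoke: "S (history S n (\<lambda>_. e) q T) = Invoke"
  shows "\<exists>w. is_ring n w \<and> ereal (3/2) \<le> ratio S n w q"
proof -
  obtain p R L c where st: "state_at S n (\<lambda>_. e) q T = ([p], home_arc n R L, c)"
    and RL: "R < K" "L < K" and cost: "q + e * real (R + L + min R L) \<le> c"
    using single_agent_phase_cost[OF phase agent] by blast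
  let ?w = "arc_weights n R L e d"
  have "state_at S n ?w q (Suc T) =
      step n ?w q (S (history S n (\<lambda>_. e) q T)) ([p], home_arc n R L, c)"
    by (rule state_at_Suc_reweighted[OF st]) (use RL n_ge in \<open>auto simp: arc_weights_def\<close>)
  then have stT: "state_at S n ?w q (Suc T) = ([p, 0], insert 0 (home_arc n R L), c + q)"
    using invoke by (simp add: step_simps)
  have "Suc R \<notin> insert 0 (home_arc n R L)" "Suc R < n" using RL n_ge by (auto simp: home_arc_def)
  then have "online_explores S n ?w q \<Longrightarrow> c + q \<le> online_cost S n ?w q"
    using online_cost_ge_cost_at[OF n_pos, of q ?w "Suc R" S "Suc T"] stT q_pos is_ring_arc_weights
    by (auto simp: cost_of_def is_ring_def less_imp_le)
  moreover have "opt_cost n ?w q \<le> q + e * real (R + L + 2)"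
    using opt_cost_le_sweep[OF is_ring_arc_weights[of R L] q_pos] sum_arc_weights_sweep[OF RL]
      by simp
  moreover have "3 * (q + e * real (R + L + 2)) - 0 \<le> 2 * (c + q)"
  proof -
    have "3 * (R + L + 2) \<le> K + 5 + 2 * (R + L + min R L)" using RL by (simp add: min_def)
    then have "e * real (3 * (R + L + 2)) \<le> e * real (K + 5 + 2 * (R + L + min R L))"
      using e_pos by (intro mult_left_mono) auto
    then show ?thesis using cost q_eq by (simp add: algebra_simps)
  qed
  ultimately have "ereal (3/2 - 0 / (2 * q)) \<le> ratio S n ?w q"
    by (intro ratio_ge_of_bounds[OF is_ring_arc_weights q_pos,
          where B = "q + e * real (R + L + 2)"]) auto
  then show ?thesis using is_ring_arc_weights by auto
qed

(* Weights revealed when the agent steps from K - 1 to K: the wall 2 q sits on edge K.  Reaching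
   the unexplored vertex n - L - 1 then costs an agent at v at least right_trap_potential L v.
   The left trap is the mirror image. *)
definition right_trap :: "nat \<Rightarrow> nat \<Rightarrow> real" where
  "right_trap L i = (if i < K then e else if i = K then 2 * q else if n - L - 1 \<le> i then e else d)"

definition right_trap_potential :: "nat \<Rightarrow> nat \<Rightarrow> real" where
  "right_trap_potential L v =
     (if v \<le> K then real (v + L + 1) * e
      else if n - L - 1 \<le> v then real (v - (n - L - 1)) * e else 0)"

definition left_trap :: "nat \<Rightarrow> nat \<Rightarrow> real" where
  "left_trap R i =
     (if i \<le> R then e else if i = n - K - 1 then 2 * q else if n - K \<le> i then e else d)"

definition left_trap_potential :: "nat \<Rightarrow> nat \<Rightarrow> real" where
  "left_trap_potential R v =
     (if v \<le> R then real (R + 1 - v) * e else if n - K \<le> v then real (n - v + R + 1) * e else 0)"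

lemma right_trap_lipschitz:
  assumes LK: "L < K"
  shows "edge_lipschitz n (right_trap L) (right_trap_potential L)"
proof -
  define f where "f = right_trap_potential L"
  define w where "w = right_trap L"
  note defs = f_def right_trap_potential_def w_def right_trap_def
  have "\<forall>v<n. \<bar>f v - f (right_nb n v)\<bar> \<le> w v"
  proof (intro allI impI)
    fix v assume vn: "v < n"
    consider "v < K" | "v = K" | "K < v" "Suc v < n - L - 1" | "K < v" "Suc v = n - L - 1"
      | "n - L - 1 \<le> v" "Suc v < n" | "Suc v = n"
      using vn LK n_ge by linarith
    then show "\<bar>f v - f (right_nb n v)\<bar> \<le> w v"
    proof cases
      case 1
      then have "right_nb n v = Suc v" using n_ge by (simp add: right_nb_Suc)
      then show ?thesis using 1 e_pos by (simp add: defs algebra_simps)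
    next
      case 2
      then have r: "right_nb n v = Suc K" using n_ge by (simp add: right_nb_Suc)
      have "\<not> (n - L - 1 \<le> Suc K)" using LK n_ge by linarith
      then have "f (Suc K) = 0" by (simp add: defs)
      moreover have "real (K + L + 1) * e \<le> 2 * q"
      proof -
        have "real (K + L + 1) * e \<le> real (2 * K) * e"
          using LK e_pos by (intro mult_right_mono) auto
        then show ?thesis using K_cost_le by (simp add: algebra_simps)
      qed
      ultimately show ?thesis using 2 r e_pos by (simp add: defs)
    next
      case 3
      then have "right_nb n v = Suc v" by (simp add: right_nb_Suc)
      then show ?thesis using 3 d_pos by (simp add: defs)
    next
      case 4
      then have "right_nb n v = Suc v" using LK n_ge by (simp add: right_nb_Suc)
      then show ?thesis using 4 d_pos by (simp add: defs)
    next
      case 5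
      then have "right_nb n v = Suc v" by (simp add: right_nb_Suc)
      moreover have "real (Suc v - (n - L - 1)) = real (v - (n - L - 1)) + 1" using 5 by linarith
      moreover have "K < v" using 5 LK n_ge by linarith
      ultimately show ?thesis using 5 e_pos by (simp add: defs algebra_simps)
    next
      case 6
      then have "right_nb n v = 0" using n_pos by (simp add: right_nb_def)
      moreover have "real (v - (n - L - 1)) = real L" using 6 LK n_ge by linarith
      moreover have "K < v" "n - L - 1 \<le> v" using 6 LK n_ge by linarith+
      ultimately show ?thesis using 6 e_pos by (simp add: defs algebra_simps)
    qed
  qed
  then show ?thesis by (simp add: edge_lipschitz_def f_def w_def)
qed

lemma left_trap_lipschitz:
  assumes RK: "R < K"
  shows "edge_lipschitz n (left_trap R) (left_trap_potential R)"
proof -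
  define f where "f = left_trap_potential R"
  define w where "w = left_trap R"
  note defs = f_def left_trap_potential_def w_def left_trap_def
  have "\<forall>v<n. \<bar>f v - f (right_nb n v)\<bar> \<le> w v"
  proof (intro allI impI)
    fix v assume vn: "v < n"
    consider "v < R" | "v = R" | "R < v" "Suc v < n - K" | "Suc v = n - K"
      | "n - K \<le> v" "Suc v < n" | "Suc v = n"
      using vn RK n_ge by linarith
    then show "\<bar>f v - f (right_nb n v)\<bar> \<le> w v"
    proof cases
      case 1
      then have "right_nb n v = Suc v" using n_ge RK by (simp add: right_nb_Suc)
      moreover have "real (R + 1 - v) = real (R + 1 - Suc v) + 1" using 1 by linarith
      ultimately show ?thesis using 1 e_pos by (simp add: defs algebra_simps)
    next
      case 2
      then have r: "right_nb n v = Suc R" using n_ge RK by (simp add: right_nb_Suc)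
      have "\<not> n - K \<le> Suc R" using RK n_ge by linarith
      then show ?thesis using 2 r e_pos by (simp add: defs)
    next
      case 3
      then have "right_nb n v = Suc v" by (simp add: right_nb_Suc)
      moreover have "\<not> n - K \<le> Suc v" "\<not> n - K \<le> v" "v \<noteq> n - K - 1" using 3 by linarith+
      ultimately show ?thesis using 3 d_pos by (simp add: defs)
    next
      case 4
      have "Suc v < n" using 4 n_ge K_ge by linarith
      then have r: "right_nb n v = n - K" using 4 by (simp add: right_nb_Suc)
      have "R < v" "\<not> n - K \<le> v" "v = n - K - 1" using 4 RK n_ge by linarith+
      moreover have "real (n - (n - K) + R + 1) * e \<le> 2 * q"
      proof -
        have "n - (n - K) = K" using n_ge by simp
        then have "real (n - (n - K) + R + 1) * e \<le> real (2 * K) * e"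
          using RK e_pos by (intro mult_right_mono) auto
        then show ?thesis using K_cost_le by (simp add: algebra_simps)
      qed
      moreover have "\<not> n - K \<le> R" using RK n_ge by linarith
      ultimately show ?thesis using r e_pos by (simp add: defs)
    next
      case 5
      then have "right_nb n v = Suc v" by (simp add: right_nb_Suc)
      moreover have "real (n - v + R + 1) = real (n - Suc v + R + 1) + 1" using 5 by linarith
      moreover have "R < v" "v \<noteq> n - K - 1" using 5 RK n_ge by linarith+
      ultimately show ?thesis using 5 e_pos by (simp add: defs algebra_simps)
    next
      case 6
      then have "right_nb n v = 0" using n_pos by (simp add: right_nb_def)
      moreover have "R < v" "v \<noteq> n - K - 1" "n - K \<le> v" "n - v = 1"
        using 6 RK n_ge K_ge by linarith+
      moreover have "f v = (real R + 2) * e" using calculation by (simp add: defs)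
      moreover have "f 0 = (real R + 1) * e" by (simp add: defs)
      moreover have "w v = e" using calculation by (simp add: w_def left_trap_def)
      ultimately show ?thesis using e_pos by (simp add: algebra_simps)
    qed
  qed
  then show ?thesis by (simp add: edge_lipschitz_def f_def w_def)
qed

lemma is_ring_right_trap: "is_ring n (right_trap L)"
  using n_ge K_ge e_pos d_pos q_pos by (auto simp: is_ring_def right_trap_def)

lemma is_ring_left_trap: "is_ring n (left_trap R)"
  using n_ge K_ge e_pos d_pos q_pos by (auto simp: is_ring_def left_trap_def)

lemma opt_cost_right_trap:
  assumes "L < K"
  shows "opt_cost n (right_trap L) q \<le> q + e * real (2 * L + K + 4)"
proof -
  have "(\<Sum>i=0..<K. right_trap L i) = real K * e" by (simp add: right_trap_def)
  moreover have "(\<Sum>i=Suc K..<n. right_trap L i) \<le> e * real (L + 2)"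
  proof -
    have "(\<Sum>i=Suc K..<n. right_trap L i)
        \<le> e * card {i\<in>{Suc K..<n}. n - L - 1 \<le> i} + d * card {Suc K..<n}"
      by (rule sum_le_two_valued) (use e_pos d_pos in \<open>auto simp: right_trap_def\<close>)
    moreover have "{i\<in>{Suc K..<n}. n - L - 1 \<le> i} = {n - L - 1..<n}" using assms n_ge by auto
    moreover have "d * card {Suc K..<n} \<le> e" by (simp add: d_times_le)
    ultimately show ?thesis using assms n_ge by (simp add: algebra_simps)
  qed
  moreover have "opt_cost n (right_trap L) q
      \<le> q + 2 * (\<Sum>i=Suc K..<n. right_trap L i) + (\<Sum>i=0..<K. right_trap L i)"
    using opt_cost_le_zigzag_left[OF is_ring_right_trap q_pos, of "Suc K"] n_ge by simp
  ultimately show ?thesis by (simp add: algebra_simps)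
qed

lemma opt_cost_left_trap:
  assumes "R < K"
  shows "opt_cost n (left_trap R) q \<le> q + e * real (2 * R + K + 4)"
proof -
  have "(\<Sum>i=n - K..<n. left_trap R i) = (\<Sum>i=n - K..<n. e)"
    by (rule sum.cong) (use assms n_ge in \<open>auto simp: left_trap_def\<close>)
  also have "\<dots> = real K * e" using n_ge by simp
  finally have "(\<Sum>i=n - K..<n. left_trap R i) = real K * e" .
  moreover have "(\<Sum>i=0..<n - K - 1. left_trap R i) \<le> e * real (R + 2)"
  proof -
    have "(\<Sum>i=0..<n - K - 1. left_trap R i)
        \<le> e * card {i\<in>{0..<n - K - 1}. i \<le> R} + d * card {0..<n - K - 1}"
      by (rule sum_le_two_valued) (use e_pos d_pos in \<open>auto simp: left_trap_def\<close>)
    moreover have "{i\<in>{0..<n - K - 1}. i \<le> R} = {0..R}" using assms n_ge by auto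
    moreover have "d * card {0..<n - K - 1} \<le> e" by (simp add: d_times_le)
    ultimately show ?thesis by (simp add: algebra_simps)
  qed
  moreover have "opt_cost n (left_trap R) q
      \<le> q + 2 * (\<Sum>i=0..<n - K - 1. left_trap R i) + (\<Sum>i=n - K..<n. left_trap R i)"
    using opt_cost_le_zigzag_right[OF is_ring_left_trap[of R] q_pos, of "n - K - 1"] n_ge K_ge
    by (simp add: Suc_diff_Suc)
  ultimately show ?thesis by (simp add: algebra_simps)
qed

lemma frontier_ratio:
  assumes "is_ring n w" "q + e * real (2 * X + K - 1) \<le> c"
    and "opt_cost n w q \<le> q + e * real (2 * X + K + 4)"
    and "online_explores S n w q \<Longrightarrow> c + e + real (K + X + 1) * e \<le> online_cost S n w q"
  shows "ereal (3/2 - 15 * e / (2 * q)) \<le> ratio S n w q"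
proof (rule ratio_ge_of_bounds[OF assms(1) q_pos _ assms(3) _ assms(4)])
  show "0 \<le> 15 * e" using e_pos by simp
  have "real (2 * X + K - 1) = 2 * real X + real K - 1" using K_ge by simp
  then show "3 * (q + e * real (2 * X + K + 4)) - 15 * e \<le> 2 * (c + e + real (K + X + 1) * e)"
    using assms(2) q_eq by (simp add: algebra_simps)
qed

lemma right_frontier_ratio:
  assumes frontier: "at_right_frontier n K q e (state_at S n (\<lambda>_. e) q T)"
    and move: "S (history S n (\<lambda>_. e) q T) = Go 0 True"
  shows "\<exists>w. is_ring n w \<and> ereal (3/2 - 15 * e / (2 * q)) \<le> ratio S n w q"
proof -
  obtain L c where st: "state_at S n (\<lambda>_. e) q T = ([K - 1], home_arc n (K - 1) L, c)"
    and LK: "L < K" and cost: "q + e * real (2 * L + K - 1) \<le> c"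
    using frontier unfolding at_right_frontier_def by blast
  let ?w = "right_trap L" and ?f = "right_trap_potential L" and ?y = "n - L - 1"
  have "state_at S n ?w q (Suc T) =
      step n ?w q (S (history S n (\<lambda>_. e) q T)) ([K - 1], home_arc n (K - 1) L, c)"
    by (rule state_at_Suc_reweighted[OF st]) (use LK n_ge K_ge in \<open>auto simp: right_trap_def\<close>)
  moreover have "right_nb n (K - 1) = K" using right_nb_Suc[of "K - 1" n] K_ge n_ge by simp
  ultimately have stT: "state_at S n ?w q (Suc T) = ([K], insert K (home_arc n (K - 1) L), c + e)"
    using move K_ge by (simp add: step_simps right_trap_def)
  have unvisited: "?y \<notin> insert K (home_arc n (K - 1) L)" and "?y < n" "?f ?y = 0"
    using LK n_ge by (auto simp: home_arc_def right_trap_potential_def)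
  moreover have "visit_bound q ?f ?y (state_at S n ?w q (Suc T)) = real (K + L + 1) * e"
    using stT unvisited K_cost_le e_pos
      by (simp add: visit_bound_def right_trap_potential_def algebra_simps)
  ultimately have "online_explores S n ?w q \<Longrightarrow> c + e + real (K + L + 1) * e \<le> online_cost S n ?w q"
    using online_cost_ge_visit_bound[OF n_pos _ right_trap_lipschitz[OF LK], of q ?y S "Suc T"]
      stT q_pos
    by (simp add: cost_of_def)
  then show ?thesis
    using frontier_ratio[OF is_ring_right_trap cost opt_cost_right_trap[OF LK]] is_ring_right_trap
      by blast
qed

lemma left_frontier_ratio:
  assumes frontier: "at_left_frontier n K q e (state_at S n (\<lambda>_. e) q T)"
    and move: "S (history S n (\<lambda>_. e) q T) = Go 0 False"
  shows "\<exists>w. is_ring n w \<and> ereal (3/2 - 15 * e / (2 * q)) \<le> ratio S n w q"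
proof -
  obtain R c where st: "state_at S n (\<lambda>_. e) q T = ([n - (K - 1)], home_arc n R (K - 1), c)"
    and RK: "R < K" and cost: "q + e * real (K - 1 + 2 * R) \<le> c"
    using frontier unfolding at_left_frontier_def by blast
  have cost': "q + e * real (2 * R + K - 1) \<le> c" using cost K_ge by (simp add: add.commute)
  let ?w = "left_trap R" and ?f = "left_trap_potential R" and ?y = "Suc R"
  have "state_at S n ?w q (Suc T) =
      step n ?w q (S (history S n (\<lambda>_. e) q T)) ([n - (K - 1)], home_arc n R (K - 1), c)"
    by (rule state_at_Suc_reweighted[OF st]) (use RK n_ge K_ge in \<open>auto simp: left_trap_def\<close>)
  moreover have "left_nb n (n - (K - 1)) = n - K"
    using left_nb_Suc[of "n - K" n] K_ge n_ge by (simp add: Suc_diff_le)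
  ultimately have stT:
      "state_at S n ?w q (Suc T) = ([n - K], insert (n - K) (home_arc n R (K - 1)), c + e)"
    using move RK n_ge by (simp add: step_simps left_trap_def)
  have unvisited: "?y \<notin> insert (n - K) (home_arc n R (K - 1))" and "?y < n" "?f ?y = 0"
    using RK n_ge by (auto simp: home_arc_def left_trap_potential_def)
  moreover have "visit_bound q ?f ?y (state_at S n ?w q (Suc T)) = real (K + R + 1) * e"
    using stT unvisited K_cost_le e_pos RK n_ge
      by (simp add: visit_bound_def left_trap_potential_def algebra_simps)
  ultimately have "online_explores S n ?w q \<Longrightarrow> c + e + real (K + R + 1) * e \<le> online_cost S n ?w q"
    using online_cost_ge_visit_bound[OF n_pos _ left_trap_lipschitz[OF RK], of q ?y S "Suc T"]
      stT q_pos
    by (simp add: cost_of_def)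
  then show ?thesis
    using frontier_ratio[OF is_ring_left_trap cost' opt_cost_left_trap[OF RK]] is_ring_left_trap
      by blast
qed

lemma exists_ring_ratio_ge:
  "\<exists>w. is_ring n w \<and> ereal (3/2 - 15 * e / (2 * q)) \<le> ratio S n w q"
proof (cases "\<forall>t. single_agent_phase n K q e (state_at S n (\<lambda>_. e) q t)")
  case True
  have "\<not> online_explores S n (\<lambda>_. e) q"
  proof
    assume "online_explores S n (\<lambda>_. e) q"
    then obtain t where "explored n (state_at S n (\<lambda>_. e) q t)" by (auto simp: online_explores_def)
    then have "K \<in> fst (snd (state_at S n (\<lambda>_. e) q t))" using n_ge by (auto simp: explored_def)
    with True show False using single_agent_phase_unvisited by blast
  qed
  moreover have "is_ring n (\<lambda>_. e)" using e_pos n_ge K_ge by (simp add: is_ring_def)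
  ultimately show ?thesis by (auto simp: ratio_def)
next
  case False
  have "\<exists>T. single_agent_phase n K q e (state_at S n (\<lambda>_. e) q T) \<and>
      \<not> single_agent_phase n K q e (state_at S n (\<lambda>_. e) q (Suc T))"
  proof (rule ccontr)
    assume no_exit: "\<not> ?thesis"
    have "single_agent_phase n K q e (state_at S n (\<lambda>_. e) q t)" for t
    proof (induction t)
      case 0
      then show ?case by (simp add: init_state_def single_agent_phase_def)
    next
      case (Suc t)
      with no_exit show ?case by blast
    qed
    with False show False by blast
  qed
  then obtain T where phase: "single_agent_phase n K q e (state_at S n (\<lambda>_. e) q T)"
    and exit: "\<not> single_agent_phase n K q e (state_at S n (\<lambda>_. e) q (Suc T))" by blast
  let ?m = "S (history S n (\<lambda>_. e) q T)"
  have "?m = Invoke \<and> fst (state_at S n (\<lambda>_. e) q T) \<noteq> [] \<or>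
      ?m = Go 0 True \<and> at_right_frontier n K q e (state_at S n (\<lambda>_. e) q T) \<or>
      ?m = Go 0 False \<and> at_left_frontier n K q e (state_at S n (\<lambda>_. e) q T)"
    using single_agent_phase_step[OF phase, of ?m] exit by (simp add: state_at_Suc)
  moreover have "ereal (3/2 - 15 * e / (2 * q)) \<le> ereal (3/2)" using e_pos q_pos by simp
  ultimately show ?thesis
    using invoke_in_phase_ratio[OF phase] right_frontier_ratio left_frontier_ratio
    by (meson order.trans)
qed

end

lemma exists_ring_ratio_ge_approx:
  assumes q: "0 < q" and N: "7 \<le> N"
  shows "\<exists>n w. is_ring n w \<and> ereal (3/2 - 8 / real N) \<le> ratio S n w q"
proof -
  define e where "e = q / real N"
  interpret ring_adversary "2 * (N - 5) + 2" "N - 5" q e S "e / real (2 * (N - 5) + 2)"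
    using q N by unfold_locales (auto simp: e_def)
  obtain w where "is_ring (2 * (N - 5) + 2) w"
    and "ereal (3/2 - 15 * e / (2 * q)) \<le> ratio S (2 * (N - 5) + 2) w q"
    using exists_ring_ratio_ge by blast
  moreover have "15 * e / (2 * q) \<le> 8 / real N" using q N by (simp add: e_def field_simps)
  ultimately show ?thesis by (meson ereal_less_eq(3) diff_left_mono order.trans)
qed

theorem theorem1:
  fixes q :: real and S :: strategy
  assumes "q > 0"
  shows "competitive_ratio S q \<ge> ereal (3/2)"
proof (rule ereal_le_epsilon2)
  fix \<epsilon> :: real assume "0 < \<epsilon>"
  obtain N :: nat where N: "max (8 / \<epsilon>) 7 < real N" using reals_Archimedean2 by blast
  then have "8 / real N < \<epsilon>" "7 \<le> N" using \<open>0 < \<epsilon>\<close> by (auto simp: field_simps)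
  obtain n w where "is_ring n w" and ratio: "ereal (3/2 - 8 / real N) \<le> ratio S n w q"
    using exists_ring_ratio_ge_approx[OF assms \<open>7 \<le> N\<close>] by blast
  then have "ereal (3/2 - 8 / real N) \<le> competitive_ratio S q"
    unfolding competitive_ratio_def by (intro SUP_upper2[of "(n, w)"]) auto
  then have "ereal (3/2 - 8 / real N) + ereal \<epsilon> \<le> competitive_ratio S q + ereal \<epsilon>"
    by (rule add_right_mono)
  moreover have "ereal (3/2) \<le> ereal (3/2 - 8 / real N) + ereal \<epsilon>"
    using \<open>8 / real N < \<epsilon>\<close> by simp
  ultimately show "ereal (3/2) \<le> competitive_ratio S q + ereal \<epsilon>" by (rule order.trans[rotated])
qed

end
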